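(* Let $d\in\mathbb{N}$ with $d\ge1$ and $\mathbf d\in\mathbb{N}^2\setminus\{(0,0)\}$. Every $\alpha\in E_d\setminus\{0\}$ admits a representation $\mathbf i=(i_1,\dots,i_s)$ with $d(\mathbf i)\le d$, $s=s_d(\alpha)$ and $i_s\le i_1+2$. Similarly, every $\alpha\in E_{\mathbf d}\setminus\{0\}$ admits a representation $\mathbf i=(i_1,\dots,i_s)$ with $(d_1(\mathbf i),d_2(\mathbf i))\le\mathbf d$ (componentwise), $s=s_{\mathbf d}(\alpha)$ and $i_s\le i_1+2$.
   Context: Let $f\colon\mathbb{Z}\to\mathbb{Z}$ be defined by $f(0)=f(1)=1$, $f(i+2)=f(i+1)+f(i)$ for all $i\in\mathbb{Z}$; $\gamma=(1+\sqrt5)/2$; $\mathbb{Z}[\gamma]=\mathbb{Z}\oplus\mathbb{Z}\gamma^{-1}$. A representation of $\alpha\in\mathbb{Z}[\gamma]$ is a finite non-decreasing sequence $\mathbf i=(i_1,\dots,i_s)$ of non-negative integers with $\alpha=\sum_k\gamma^{-i_k}$ (empty sum $=0$); $d(\mathbf i)=\sum_kf(i_k)$, $d_1(\mathbf i)=\sum_kf(i_k-2)$, $d_2(\mathbf i)=\sum_kf(i_k-1)$. $E_d$ is the set of $\alpha$ having a representation $\mathbf i$ with $d(\mathbf i)\le d$, and $s_d(\alpha)$ the largest size $s$ of such a representation; $E_{\mathbf d}$ is the set of $\alpha$ having a representation with $(d_1(\mathbf i),d_2(\mathbf i))\le\mathbf d$ componentwise, and $s_{\mathbf d}(\alpha)$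 the largest size of such a representation. *)

theory Defs
  imports Complex_Main
begin

function fibZ :: "int \<Rightarrow> int" where
  "fibZ i = (if i = 0 \<or> i = 1 then 1
             else if i \<ge> 2 then fibZ (i - 1) + fibZ (i - 2)
             else fibZ (i + 2) - fibZ (i + 1))"
  by auto
termination
  by (relation "measure (\<lambda>i. if i \<ge> 1 then nat i else nat (1 - i))") auto

definition gold :: real where
  "gold = (1 + sqrt 5) / 2"

definition is_rep :: "nat list \<Rightarrow> real \<Rightarrow> bool" where
  "is_rep is \<alpha> \<longleftrightarrow> sorted is \<and> \<alpha> = (\<Sum>i\<leftarrow>is. inverse gold ^ i)"

definition dd :: "nat list \<Rightarrow> int" where
  "dd is = (\<Sum>i\<leftarrow>is. fibZ (int i))"

definition dd1 :: "nat list \<Rightarrow> int" where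
  "dd1 is = (\<Sum>i\<leftarrow>is. fibZ (int i - 2))"

definition dd2 :: "nat list \<Rightarrow> int" where
  "dd2 is = (\<Sum>i\<leftarrow>is. fibZ (int i - 1))"

definition E :: "nat \<Rightarrow> real set" where
  "E d = {\<alpha>. \<exists>is. is_rep is \<alpha> \<and> dd is \<le> int d}"

definition s_of :: "nat \<Rightarrow> real \<Rightarrow> nat" where
  "s_of d \<alpha> = Max {length is | is. is_rep is \<alpha> \<and> dd is \<le> int d}"

definition E2 :: "nat \<times> nat \<Rightarrow> real set" where
  "E2 D = {\<alpha>. \<exists>is. is_rep is \<alpha> \<and> dd1 is \<le> int (fst D) \<and> dd2 is \<le> int (snd D)}"

definition s2_of :: "nat \<times> nat \<Rightarrow> real \<Rightarrow> nat" where
  "s2_of D \<alpha> = Max {length is | is. is_rep is \<alpha> \<and> dd1 is \<le> int (fst D) \<and> dd2 is \<le> int (snd D)}"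

end

theory Submission
  imports Defs "HOL-Library.Multiset"
begin

(* Write q = 1/gamma, so q + q^2 = 1, and for an integer c let the cost of a
   representation (i_1, ..., i_s) be cost c = sum_k f(i_k + c); then d = cost 0 = cost (-2) + cost (-1), d_1 = cost (-2) and
   d_2 = cost (-1), so both budget conditions are monotone in the pair (cost (-2), cost (-1)).
   The key identity: for k >= 3 the pair q^0 + q^k has another representation S with at least
   two terms, none of its costs cost c (c >= -2) larger, and with at least three terms unless
   k = 3, where S = [1,1] has smaller index sum (q + q = 1 + q^3).  Shifting S by x replaces
   any pair x, x + k inside a representation.
   Hence among all admissible representations of alpha choose one of maximal length and, among
   those, of minimal index sum: any two of its indices differ by at most 2, and sorting it gives
   the required representation. *)

(* fibZ.simps rewrites forever; the recurrence is used through fibZ_rec instead. *)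
declare fibZ.simps [simp del]

lemma fibZ_rec: "fibZ (n + 2) = fibZ (n + 1) + fibZ n"
proof (cases "n \<ge> 0")
  case True
  then show ?thesis by (subst fibZ.simps[of "n + 2"]) (simp add: ac_simps)
next
  case False
  then show ?thesis by (subst fibZ.simps[of n]) simp
qed

lemma fibZ_0: "fibZ 0 = 1" and fibZ_1: "fibZ 1 = 1"
  by (simp_all add: fibZ.simps)

(* f is positive on the natural numbers (this bounds the length of a representation by d). *)
lemma fibZ_pos:
  assumes "n \<ge> 0"
  shows "fibZ n \<ge> 1"
proof -
  have "1 \<le> fibZ n \<and> 1 \<le> fibZ (n + 1)"
    using assms
  proof (induction n rule: int_ge_induct)
    case base
    then show ?case by (simp add: fibZ_0 fibZ_1)
  next
    case (step n)
    then show ?case using fibZ_rec[of n] by (simp add: add.assoc)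
  qed
  then show ?thesis by simp
qed

(* f is nonnegative from -2 on (f(-1) = 0, f(-2) = 1); hence the correction terms f(c) in the
   gap splittings below can only lower the costs c = -2, -1 that make up d, d_1 and d_2. *)
lemma fibZ_nonneg:
  assumes "n \<ge> -2"
  shows "fibZ n \<ge> 0"
proof -
  have m1: "fibZ (-1) = 0" using fibZ_rec[of "-1"] by (simp add: fibZ_0 fibZ_1)
  have m2: "fibZ (-2) = 1" using fibZ_rec[of "-2"] by (simp add: fibZ_0 m1)
  consider "n = -2" | "n = -1" | "n \<ge> 0" using assms by linarith
  then show ?thesis using m1 m2 fibZ_pos by cases force+
qed

definition ginv :: real where "ginv = inverse gold"

lemma ginv_sq: "ginv ^ 2 = 1 - ginv"
proof -
  have "gold > 0" "gold ^ 2 = gold + 1"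
    unfolding gold_def by (simp_all add: add_pos_nonneg power2_eq_square field_simps)
  then show ?thesis unfolding ginv_def by (simp add: power2_eq_square field_simps)
qed

lemma ginv_cube: "ginv ^ 3 = 2 * ginv - 1"
proof -
  have "ginv ^ 3 = ginv * ginv ^ 2" by (simp add: power2_eq_square power3_eq_cube)
  also have "\<dots> = ginv * (1 - ginv)" by (simp only: ginv_sq)
  also have "\<dots> = ginv - ginv ^ 2" by (simp add: algebra_simps power2_eq_square)
  also have "\<dots> = 2 * ginv - 1" by (simp add: ginv_sq)
  finally show ?thesis .
qed

lemma ginv_pow4: "ginv ^ 4 = 2 - 3 * ginv"
proof -
  have "ginv ^ 4 = ginv * ginv ^ 3" by (simp add: power3_eq_cube power4_eq_xxxx)
  also have "\<dots> = 2 * ginv ^ 2 - ginv" by (simp add: ginv_cube algebra_simps power2_eq_square)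
  also have "\<dots> = 2 - 3 * ginv" by (simp add: ginv_sq)
  finally show ?thesis .
qed

definition val :: "nat list \<Rightarrow> real" where
  "val xs = (\<Sum>i\<leftarrow>xs. ginv ^ i)"

definition cost :: "int \<Rightarrow> nat list \<Rightarrow> int" where
  "cost c xs = (\<Sum>i\<leftarrow>xs. fibZ (int i + c))"

lemma val_simps [simp]: "val [] = 0" "val (i # xs) = ginv ^ i + val xs" "val (xs @ ys) = val xs + val ys"
  by (simp_all add: val_def)

lemma cost_simps [simp]: "cost c [] = 0" "cost c (i # xs) = fibZ (int i + c) + cost c xs"
  "cost c (xs @ ys) = cost c xs + cost c ys"
  by (simp_all add: cost_def)

lemma val_shift: "val (map ((+) a) xs) = ginv ^ a * val xs"
  unfolding val_def by (induction xs) (simp_all add: power_add algebra_simps)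

lemma cost_shift: "cost c (map ((+) a) xs) = cost (int a + c) xs"
  unfolding cost_def by (induction xs) (simp_all add: algebra_simps)

(* Splitting an odd gap: starting from q^0 + q^3 = q + q and using q^0 + q^(k+2) =
   q + q^2 (q^0 + q^k), the pair q^0 + q^(2n+3) gets a representation with n + 2 terms
   whose costs are f(2n+3+c) - f(c). *)
lemma odd_gap_rep:
  "\<exists>S. val S = 1 + ginv ^ (2 * n + 3) \<and> length S = n + 2 \<and>
       (\<forall>c. cost c S + fibZ c = fibZ (int (2 * n + 3) + c))"
proof (induction n)
  case 0
  have "val [1, 1] = 1 + ginv ^ 3"
    by (simp add: ginv_cube)
  moreover have "cost c [1, 1] + fibZ c = fibZ (3 + c)" for c
    using fibZ_rec[of c] fibZ_rec[of "c + 1"] by (simp add: ac_simps)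
  ultimately show ?case by (intro exI[of _ "[1, 1]"]) simp
next
  case (Suc n)
  then obtain S where S: "val S = 1 + ginv ^ (2 * n + 3)" "length S = n + 2"
    "\<And>c. cost c S + fibZ c = fibZ (int (2 * n + 3) + c)" by blast
  define S' where "S' = 1 # map ((+) 2) S"
  have "val S' = ginv + ginv ^ 2 + ginv ^ (2 * Suc n + 3)"
    by (simp add: S'_def val_shift S(1) algebra_simps flip: power_add)
  also have "ginv + ginv ^ 2 = 1" by (simp add: ginv_sq)
  finally have "val S' = 1 + ginv ^ (2 * Suc n + 3)" .
  moreover have "cost c S' + fibZ c = fibZ (int (2 * Suc n + 3) + c)" for c
    using S(3)[of "2 + c"] fibZ_rec[of c]
    by (simp add: S'_def cost_shift ac_simps)
  moreover have "length S' = Suc n + 2" by (simp add: S'_def S(2))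
  ultimately show ?case by blast
qed

(* Splitting an even gap: [2,2,2] for q^0 + q^4, and in general 2, 2 followed by the odd
   splitting of q^3 + q^(2n+4); n + 3 terms of costs f(c) + f(2n+4+c). *)
lemma even_gap_rep:
  "\<exists>S. val S = 1 + ginv ^ (2 * n + 4) \<and> length S = n + 3 \<and>
       (\<forall>c. cost c S = fibZ c + fibZ (int (2 * n + 4) + c))"
proof (cases n)
  case 0
  have "val [2, 2, 2] = 1 + ginv ^ 4"
    by (simp add: ginv_sq ginv_pow4)
  moreover have "cost c [2, 2, 2] = fibZ c + fibZ (4 + c)" for c
    using fibZ_rec[of c] fibZ_rec[of "c + 1"] fibZ_rec[of "c + 2"] by (simp add: ac_simps)
  ultimately show ?thesis using 0 by (intro exI[of _ "[2, 2, 2]"]) simp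
next
  case (Suc m)
  obtain S where S: "val S = 1 + ginv ^ (2 * m + 3)" "length S = m + 2"
    "\<And>c. cost c S + fibZ c = fibZ (int (2 * m + 3) + c)"
    using odd_gap_rep[of m] by blast
  define S' where "S' = 2 # 2 # map ((+) 3) S"
  have "val S' = ginv ^ 2 + (ginv ^ 2 + ginv ^ 3) + ginv ^ (2 * n + 4)"
    by (simp add: S'_def val_shift S(1) Suc algebra_simps flip: power_add)
  also have "ginv ^ 2 + (ginv ^ 2 + ginv ^ 3) = 1"
    by (simp add: ginv_sq ginv_cube)
  finally have "val S' = 1 + ginv ^ (2 * n + 4)" .
  moreover have "cost c S' = fibZ c + fibZ (int (2 * n + 4) + c)" for c
    using S(3)[of "3 + c"] fibZ_rec[of c] fibZ_rec[of "c + 1"]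
    by (simp add: S'_def cost_shift Suc ac_simps)
  moreover have "length S' = n + 3" by (simp add: S'_def S(2) Suc)
  ultimately show ?thesis by blast
qed

lemma gap_rep:
  assumes "k \<ge> 3"
  shows "\<exists>S. val S = 1 + ginv ^ k \<and> 2 \<le> length S \<and> (length S = 2 \<longrightarrow> sum_list S < k) \<and>
             (\<forall>c \<ge> -2. cost c S \<le> fibZ c + fibZ (int k + c))"
proof -
  have "k = 3 \<or> (\<exists>n. k = 2 * n + 3 \<and> n \<ge> 1) \<or> (\<exists>n. k = 2 * n + 4)"
    using assms by presburger
  then consider "k = 3" | n where "k = 2 * n + 3" "n \<ge> 1" | n where "k = 2 * n + 4"
    by blast
  then show ?thesis
  proof cases
    case 1
    have "val [1, 1] = 1 + ginv ^ 3"
      by (simp add: ginv_cube)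
    moreover have "cost c [1, 1] \<le> fibZ c + fibZ (3 + c)" if "c \<ge> -2" for c
      using fibZ_rec[of c] fibZ_rec[of "c + 1"] fibZ_nonneg[OF that] by (simp add: ac_simps)
    ultimately show ?thesis using 1 by (intro exI[of _ "[1, 1]"]) simp
  next
    case 2
    then obtain S where S: "val S = 1 + ginv ^ k" "length S = n + 2"
      "\<And>c. cost c S + fibZ c = fibZ (int k + c)"
      using odd_gap_rep[of n] by auto
    have "cost c S \<le> fibZ c + fibZ (int k + c)" if "c \<ge> -2" for c
      using S(3)[of c] fibZ_nonneg[OF that] by linarith
    then show ?thesis using S(1,2) 2 by (intro exI[of _ S]) auto
  next
    case 3
    then show ?thesis using even_gap_rep[of n] by fastforce
  qed
qed

lemma sum_list_map_mset_eq:
  fixes g :: "'a \<Rightarrow> 'b::comm_monoid_add"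
  assumes "mset xs = mset ys"
  shows "sum_list (map g xs) = sum_list (map g ys)"
proof -
  have "sum_list (map g zs) = sum_mset (image_mset g (mset zs))" for zs
    by (induction zs) auto
  then show ?thesis using assms by simp
qed

lemma wide_pair_exchange:
  assumes xy: "x \<in> set xs" "y \<in> set xs" and gap: "x + 3 \<le> y"
  shows "\<exists>ys. val ys = val xs \<and> (\<forall>c \<ge> -2. cost c ys \<le> cost c xs) \<and>
              (length xs < length ys \<or> length ys = length xs \<and> sum_list ys < sum_list xs)"
proof -
  define rest where "rest = remove1 x (remove1 y xs)"
  have pick: "mset zs = add_mset a (mset (remove1 a zs))" if "a \<in> set zs" for a :: nat and zs
    using that by simp
  have "x \<in> set (remove1 y xs)" using xy gap by (simp add: in_set_remove1)
  then have "mset xs = mset (x # y # rest)"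
    using pick[OF xy(2)] pick[of x "remove1 y xs"] by (simp add: rest_def add_mset_commute)
  then have xs_split: "sum_list (map g xs) = g x + g y + sum_list (map g rest)"
    for g :: "nat \<Rightarrow> 'a::comm_monoid_add"
    by (simp add: sum_list_map_mset_eq[of xs "x # y # rest"] add.assoc)
  have "3 \<le> y - x" using gap by simp
  from gap_rep[OF this] obtain S where S: "val S = 1 + ginv ^ (y - x)" "2 \<le> length S"
    "length S = 2 \<longrightarrow> sum_list S < y - x"
    "\<And>c. c \<ge> -2 \<Longrightarrow> cost c S \<le> fibZ c + fibZ (int (y - x) + c)"
    by blast
  define ys where "ys = map ((+) x) S @ rest"
  have "ginv ^ x * ginv ^ (y - x) = ginv ^ y" using gap by (simp flip: power_add)
  then have "val ys = ginv ^ x + ginv ^ y + val rest"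
    by (simp add: ys_def val_shift S(1) distrib_left)
  also have "\<dots> = val xs" using xs_split[of "\<lambda>i. ginv ^ i"] by (simp add: val_def)
  finally have "val ys = val xs" .
  moreover have "cost c ys \<le> cost c xs" if "c \<ge> -2" for c
  proof -
    have "cost c ys \<le> fibZ (int x + c) + fibZ (int y + c) + cost c rest"
      using S(4)[of "int x + c"] that gap by (simp add: ys_def cost_shift algebra_simps of_nat_diff)
    also have "\<dots> = cost c xs" using xs_split[of "\<lambda>i. fibZ (int i + c)"] by (simp add: cost_def)
    finally show ?thesis .
  qed
  moreover have "length xs < length ys \<or> length ys = length xs \<and> sum_list ys < sum_list xs"
  proof -
    have "sum_list (map ((+) x) S) = length S * x + sum_list S" by (induction S) auto
    then have "sum_list ys = length S * x + sum_list S + sum_list rest" by (simp add: ys_def)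
    moreover have "sum_list xs = x + y + sum_list rest" using xs_split[of id] by simp
    moreover have "length xs = 2 + length rest"
      using xs_split[of "\<lambda>_. 1::nat"] by (simp add: sum_list_triv)
    ultimately have sums: "sum_list ys + (x + y) = length S * x + sum_list S + sum_list xs"
      and lens: "length xs = 2 + length rest" by simp_all
    show ?thesis
    proof (cases "length S = 2")
      case True
      then show ?thesis using sums S(3) gap by (simp add: ys_def lens)
    next
      case False
      then show ?thesis using S(2) by (simp add: ys_def lens)
    qed
  qed
  ultimately show ?thesis by blast
qed

lemma lex_optimal_exists:
  fixes P :: "nat list \<Rightarrow> bool"
  assumes "P xs0" and "\<And>xs. P xs \<Longrightarrow> length xs \<le> N"
  shows "\<exists>xs. P xs \<and> (\<forall>ys. P ys \<longrightarrow> length ys \<le> length xs) \<and>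
              (\<forall>ys. P ys \<and> length ys = length xs \<longrightarrow> sum_list xs \<le> sum_list ys)"
proof -
  obtain xs1 where xs1: "P xs1" "\<And>ys. P ys \<Longrightarrow> length ys \<le> length xs1"
    using Lattices_Big.ex_has_greatest_nat[of P xs0 length "Suc N"] assms by (auto simp: less_Suc_eq_le)
  obtain xs where "P xs \<and> length xs = length xs1"
    "\<And>ys. P ys \<and> length ys = length xs1 \<Longrightarrow> sum_list xs \<le> sum_list ys"
    using ex_has_least_nat[of "\<lambda>xs. P xs \<and> length xs = length xs1" xs1 sum_list] xs1(1) by blast
  then show ?thesis using xs1(2) by auto
qed

lemma is_rep_iff: "is_rep xs \<alpha> \<longleftrightarrow> sorted xs \<and> val xs = \<alpha>"
  unfolding is_rep_def val_def ginv_def by auto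

lemma narrow_optimal_rep:
  fixes Adm :: "nat list \<Rightarrow> bool"
  assumes mono: "\<And>xs ys. Adm xs \<Longrightarrow> cost (-2) ys \<le> cost (-2) xs \<Longrightarrow>
                    cost (-1) ys \<le> cost (-1) xs \<Longrightarrow> Adm ys"
    and bound: "\<And>xs. Adm xs \<Longrightarrow> length xs \<le> N"
    and rep: "is_rep xs0 \<alpha>" "Adm xs0" and nonzero: "\<alpha> \<noteq> 0"
  shows "\<exists>ys. is_rep ys \<alpha> \<and> Adm ys \<and> length ys = Max {length zs | zs. is_rep zs \<alpha> \<and> Adm zs}
             \<and> ys \<noteq> [] \<and> last ys \<le> hd ys + 2"
proof -
  let ?P = "\<lambda>xs. val xs = \<alpha> \<and> Adm xs"
  have mono': "Adm ys" if "Adm xs" "\<forall>c \<ge> -2. cost c ys \<le> cost c xs" for xs ys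
    using mono that by simp
  obtain xs where xs: "?P xs" and longest: "\<And>ys. ?P ys \<Longrightarrow> length ys \<le> length xs"
    and least: "\<And>ys. ?P ys \<Longrightarrow> length ys = length xs \<Longrightarrow> sum_list xs \<le> sum_list ys"
    using lex_optimal_exists[of ?P xs0 N] rep bound by (auto simp: is_rep_iff)
  have narrow: "y \<le> x + 2" if xy: "x \<in> set xs" "y \<in> set xs" for x y
  proof (rule ccontr)
    assume "\<not> y \<le> x + 2"
    then obtain ys where ys: "val ys = val xs" "\<forall>c \<ge> -2. cost c ys \<le> cost c xs"
      "length xs < length ys \<or> length ys = length xs \<and> sum_list ys < sum_list xs"
      using wide_pair_exchange[OF xy] by auto
    have "?P ys" using ys(1,2) xs mono' by auto
    then show False using ys(3) longest least by fastforce
  qed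
  define ys where "ys = sort xs"
  have "val ys = val xs" "\<forall>c. cost c ys = cost c xs"
    unfolding ys_def val_def cost_def by (simp_all add: sum_list_map_mset_eq[of "sort xs" xs])
  then have ys: "is_rep ys \<alpha>" "Adm ys" using xs mono' by (auto simp: is_rep_iff ys_def)
  have "xs \<noteq> []" using xs nonzero by auto
  then have "ys \<noteq> []" by (metis length_0_conv length_sort ys_def)
  moreover have "last ys \<le> hd ys + 2"
    using narrow \<open>ys \<noteq> []\<close> by (metis hd_in_set last_in_set set_sort ys_def)
  moreover have "Max {length zs | zs. is_rep zs \<alpha> \<and> Adm zs} = length ys"
  proof (rule Max_eqI)
    show "finite {length zs | zs. is_rep zs \<alpha> \<and> Adm zs}"
      by (rule finite_subset[of _ "{..N}"]) (auto dest: bound)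
    show "n \<le> length ys" if "n \<in> {length zs | zs. is_rep zs \<alpha> \<and> Adm zs}" for n
      using that longest by (auto simp: is_rep_iff ys_def)
    show "length ys \<in> {length zs | zs. is_rep zs \<alpha> \<and> Adm zs}" using ys by blast
  qed
  ultimately show ?thesis using ys by metis
qed

lemma dd_eq_cost: "dd xs = cost (-2) xs + cost (-1) xs"
  using fibZ_rec[of "int i - 2" for i] by (induction xs) (simp_all add: dd_def algebra_simps)

lemma dd1_eq_cost: "dd1 xs = cost (-2) xs" and dd2_eq_cost: "dd2 xs = cost (-1) xs"
  by (simp_all add: dd1_def dd2_def cost_def)

lemma length_le_dd: "int (length xs) \<le> dd xs"
proof (induction xs)
  case (Cons i xs)
  then show ?case using fibZ_pos[of "int i"] by (simp add: dd_def)
qed (simp add: dd_def)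

lemma narrow_rep_E:
  assumes "\<alpha> \<in> E d - {0}"
  shows "\<exists>is. is_rep is \<alpha> \<and> dd is \<le> int d \<and> length is = s_of d \<alpha> \<and> is \<noteq> [] \<and> last is \<le> hd is + 2"
proof -
  obtain xs0 where rep: "is_rep xs0 \<alpha>" "dd xs0 \<le> int d" and "\<alpha> \<noteq> 0"
    using assms unfolding E_def by blast
  have "\<exists>is. is_rep is \<alpha> \<and> dd is \<le> int d \<and> length is = Max {length zs | zs. is_rep zs \<alpha> \<and> dd zs \<le> int d}
          \<and> is \<noteq> [] \<and> last is \<le> hd is + 2"
  proof (rule narrow_optimal_rep[where Adm = "\<lambda>xs. dd xs \<le> int d" and N = d])
    show "dd ys \<le> int d"
      if "dd xs \<le> int d" "cost (-2) ys \<le> cost (-2) xs" "cost (-1) ys \<le> cost (-1) xs" for xs ys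
      using that by (simp add: dd_eq_cost)
    show "length xs \<le> d" if "dd xs \<le> int d" for xs
      using that length_le_dd[of xs] by linarith
  qed fact+
  then show ?thesis unfolding s_of_def .
qed

lemma narrow_rep_E2:
  assumes "\<alpha> \<in> E2 D - {0}"
  shows "\<exists>is. is_rep is \<alpha> \<and> dd1 is \<le> int (fst D) \<and> dd2 is \<le> int (snd D)
           \<and> length is = s2_of D \<alpha> \<and> is \<noteq> [] \<and> last is \<le> hd is + 2"
proof -
  obtain xs0 where rep: "is_rep xs0 \<alpha>" "dd1 xs0 \<le> int (fst D) \<and> dd2 xs0 \<le> int (snd D)"
    and "\<alpha> \<noteq> 0"
    using assms unfolding E2_def by blast
  have "\<exists>is. is_rep is \<alpha> \<and> (dd1 is \<le> int (fst D) \<and> dd2 is \<le> int (snd D))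
          \<and> length is = Max {length zs | zs. is_rep zs \<alpha> \<and> (dd1 zs \<le> int (fst D) \<and> dd2 zs \<le> int (snd D))}
          \<and> is \<noteq> [] \<and> last is \<le> hd is + 2"
  proof (rule narrow_optimal_rep[where Adm = "\<lambda>xs. dd1 xs \<le> int (fst D) \<and> dd2 xs \<le> int (snd D)"
        and N = "fst D + snd D"])
    show "dd1 ys \<le> int (fst D) \<and> dd2 ys \<le> int (snd D)"
      if "dd1 xs \<le> int (fst D) \<and> dd2 xs \<le> int (snd D)"
        "cost (-2) ys \<le> cost (-2) xs" "cost (-1) ys \<le> cost (-1) xs" for xs ys
      using that by (simp add: dd1_eq_cost dd2_eq_cost)
    show "length xs \<le> fst D + snd D" if "dd1 xs \<le> int (fst D) \<and> dd2 xs \<le> int (snd D)" for xs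
      using that length_le_dd[of xs] by (simp add: dd_eq_cost dd1_eq_cost dd2_eq_cost)
  qed fact+
  then show ?thesis unfolding s2_of_def by simp
qed

theorem mainTheorem15:
  fixes d :: nat and D :: "nat \<times> nat"
  assumes "d \<ge> 1" and "D \<noteq> (0, 0)"
  shows "(\<forall>\<alpha>\<in>E d - {0}. \<exists>is. is_rep is \<alpha> \<and> dd is \<le> int d \<and> length is = s_of d \<alpha>
             \<and> is \<noteq> [] \<and> last is \<le> hd is + 2)
       \<and> (\<forall>\<alpha>\<in>E2 D - {0}. \<exists>is. is_rep is \<alpha> \<and> dd1 is \<le> int (fst D) \<and> dd2 is \<le> int (snd D)
             \<and> length is = s2_of D \<alpha> \<and> is \<noteq> [] \<and> last is \<le> hd is + 2)"
  using narrow_rep_E[of _ d] narrow_rep_E2[of _ D] by blast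

end
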